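(* Let $h:(\mathbb{R}^n,0)\to(\mathbb{R}^n,0)$ be a bi-Lipschitz homeomorphism germ. Suppose that $h^{-1}(\tau)$ satisfies condition (SSP) for every semiline $\tau$. Then $LD(h(\ell))$ is a semiline for every semiline $\ell$; that is, $h$ satisfies condition semiline-(SSP).
   Context: For a set-germ $A\subset\mathbb{R}^n$ at $0$ with $0\in\overline A$, $D(A)=\{a\in S^{n-1}:\exists\, x_i\in A\setminus\{0\},\ x_i\to0,\ x_i/\|x_i\|\to a\}$ and $LD(A)=\{ta:a\in D(A),t\ge0\}$. A semiline is a set $\{ta:t\ge0\}$ with $a\in S^{n-1}$. For sequences, $\|u_m\|\ll\|v_m\|,\|w_m\|$ means $\|u_m\|/\|v_m\|\to0$ and $\|u_m\|/\|w_m\|\to0$. $A$ satisfies condition (SSP) if for every sequence $a_m\in\mathbb{R}^n$ tending to $0$ with $\lim a_m/\|a_m\|\in D(A)$ there is a sequence $b_m\in A$ with $\|a_m-b_m\|\ll\|a_m\|,\|b_m\|$. A homeomorphism germ $h$ satisfies condition semiline-(SSP) if $D(h(\ell))$ is a single point for every semiline $\ell$. A bi-Lipschitz homeomorphism germ is a homeomorphism germ $h$ with $h(0)=0$ and constants $0<K_1\le K_2$ with $K_1\|x-y\|\le\|h(x)-h(y)\|\le K_2\|x-y\|$ near $0$. *)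

theory Defs
  imports "HOL-Analysis.Analysis"
begin

definition dirs :: "'a::euclidean_space set \<Rightarrow> 'a set" where
  "dirs A = {a. norm a = 1 \<and> (\<exists>x::nat \<Rightarrow> 'a. (\<forall>i. x i \<in> A - {0}) \<and> x \<longlonglongrightarrow> 0
                 \<and> (\<lambda>i. x i /\<^sub>R norm (x i)) \<longlonglongrightarrow> a)}"

definition LD :: "'a::euclidean_space set \<Rightarrow> 'a set" where
  "LD A = {t *\<^sub>R a | t a. a \<in> dirs A \<and> t \<ge> 0}"

definition is_semiline :: "'a::euclidean_space set \<Rightarrow> bool" where
  "is_semiline S \<longleftrightarrow> (\<exists>a. norm a = 1 \<and> S = {t *\<^sub>R a | t. t \<ge> 0})"

definition SSP :: "'a::euclidean_space set \<Rightarrow> bool" where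
  "SSP A \<longleftrightarrow> (\<forall>a::nat \<Rightarrow> 'a. a \<longlonglongrightarrow> 0 \<and> (\<exists>v\<in>dirs A. (\<lambda>m. a m /\<^sub>R norm (a m)) \<longlonglongrightarrow> v)
     \<longrightarrow> (\<exists>b::nat \<Rightarrow> 'a. (\<forall>m. b m \<in> A)
           \<and> (\<lambda>m. norm (a m - b m) / norm (a m)) \<longlonglongrightarrow> 0
           \<and> (\<lambda>m. norm (a m - b m) / norm (b m)) \<longlonglongrightarrow> 0))"

end

theory Submission
  imports Defs "HOL-Homology.Invariance_of_Domain"
begin

text \<open>Let \<open>l\<close> be a semiline with direction \<open>a\<close>, and let \<open>p\<close>, \<open>q\<close> be directions of \<open>h(l)\<close>,
  attained along image sequences \<open>h(u\<^sub>i)\<close> and \<open>h(u'\<^sub>i)\<close> with \<open>u\<^sub>i\<close>, \<open>u'\<^sub>i\<close> on \<open>l\<close>.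
  A bi-Lipschitz map fixing 0 preserves and reflects relative closeness
  \<open>\<parallel>x\<^sub>i - x'\<^sub>i\<parallel> \<ll> \<parallel>x\<^sub>i\<parallel>\<close> of sequences, and relatively close sequences have the same
  limit direction. Pulling back the points \<open>\<parallel>h(u\<^sub>i)\<parallel> p\<close> of the semiline \<open>\<tau>\<close> spanned
  by \<open>p\<close> (possible since \<open>h\<close> is open by invariance of domain) shows that \<open>a\<close> is a direction
  of \<open>h\<^sup>-\<^sup>1(\<tau>)\<close>. Condition (SSP) for \<open>h\<^sup>-\<^sup>1(\<tau>)\<close> now yields points \<open>b\<^sub>i \<in> h\<^sup>-\<^sup>1(\<tau>)\<close>
  relatively close to \<open>u'\<^sub>i\<close>; their images lie on \<open>\<tau>\<close> and are relatively close to \<open>h(u'\<^sub>i)\<close>,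
  so \<open>q = p\<close>. A direction exists by compactness of the unit sphere.\<close>

definition ray :: "'a::real_vector \<Rightarrow> 'a set" where
  "ray a = {t *\<^sub>R a | t. t \<ge> 0}"

lemma is_semiline_ray: "norm a = 1 \<Longrightarrow> is_semiline (ray a)"
  unfolding is_semiline_def ray_def by blast

lemma ray_normalize:
  fixes a :: "'a::real_normed_vector"
  assumes "x \<in> ray a" "x \<noteq> 0" "norm a = 1"
  shows "x /\<^sub>R norm x = a"
  using assms by (auto simp: ray_def)

lemma LD_eq_ray: "dirs A = {p} \<Longrightarrow> LD A = ray p"
  unfolding LD_def ray_def by auto

lemma dirsI_eventually:
  fixes x :: "nat \<Rightarrow> 'a::euclidean_space"
  assumes "\<forall>\<^sub>F i in sequentially. x i \<in> A - {0}"
    and "x \<longlonglongrightarrow> 0" and "(\<lambda>i. x i /\<^sub>R norm (x i)) \<longlonglongrightarrow> a" and "norm a = 1"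
  shows "a \<in> dirs A"
proof -
  obtain N where N: "\<And>i. i \<ge> N \<Longrightarrow> x i \<in> A - {0}"
    using assms(1) unfolding eventually_sequentially by blast
  show ?thesis
    unfolding dirs_def
  proof (intro CollectI conjI exI[of _ "\<lambda>i. x (i + N)"])
    show "\<forall>i. x (i + N) \<in> A - {0}" using N by simp
    show "(\<lambda>i. x (i + N)) \<longlonglongrightarrow> 0" using LIMSEQ_ignore_initial_segment[OF assms(2)] .
    show "(\<lambda>i. x (i + N) /\<^sub>R norm (x (i + N))) \<longlonglongrightarrow> a"
      using LIMSEQ_ignore_initial_segment[OF assms(3)] .
  qed (rule assms(4))
qed

lemma dirs_nonempty:
  fixes x :: "nat \<Rightarrow> 'a::euclidean_space"
  assumes "\<And>i. x i \<in> A - {0}" and "x \<longlonglongrightarrow> 0"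
  shows "dirs A \<noteq> {}"
proof -
  have "\<forall>i. x i /\<^sub>R norm (x i) \<in> sphere 0 1" using assms(1) by simp
  then obtain p \<sigma> where p: "p \<in> sphere 0 1" "strict_mono \<sigma>"
      "((\<lambda>i. x i /\<^sub>R norm (x i)) \<circ> \<sigma>) \<longlonglongrightarrow> p"
    using compact_sphere unfolding compact_eq_seq_compact_metric seq_compact_def by meson
  have "p \<in> dirs A"
    unfolding dirs_def
  proof (intro CollectI conjI exI[of _ "x \<circ> \<sigma>"])
    show "(x \<circ> \<sigma>) \<longlonglongrightarrow> 0" using LIMSEQ_subseq_LIMSEQ[OF assms(2) p(2)] .
  qed (use assms(1) p in \<open>auto simp: o_def\<close>)
  then show ?thesis by blast
qed

definition rel_close :: "(nat \<Rightarrow> 'a::real_normed_vector) \<Rightarrow> (nat \<Rightarrow> 'a) \<Rightarrow> bool" where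
  "rel_close x y \<longleftrightarrow> (\<lambda>i. norm (x i - y i) / norm (x i)) \<longlonglongrightarrow> 0"

lemma norm_normalize_diff_le:
  fixes u w :: "'a::real_normed_vector"
  assumes "u \<noteq> 0"
  shows "norm (w /\<^sub>R norm w - u /\<^sub>R norm u) \<le> 2 * norm (w - u) / norm u"
proof (cases "w = 0")
  case True
  then show ?thesis using assms by simp
next
  case False
  have nu: "norm u > 0" and nw: "norm w > 0" using assms False by simp_all
  have "w /\<^sub>R norm w - u /\<^sub>R norm u
      = (w - u) /\<^sub>R norm u + ((norm u - norm w) / (norm w * norm u)) *\<^sub>R w"
  proof -
    have "(norm u - norm w) / (norm w * norm u) = 1 / norm w - 1 / norm u"
      using nu nw by (simp add: field_simps)
    then show ?thesis
      by (simp add: scaleR_diff_left scaleR_diff_right divide_inverse_commute)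
  qed
  also have "norm \<dots> \<le> norm ((w - u) /\<^sub>R norm u)
      + norm (((norm u - norm w) / (norm w * norm u)) *\<^sub>R w)"
    by (rule norm_triangle_ineq)
  also have "\<dots> = norm (w - u) / norm u + \<bar>norm u - norm w\<bar> / norm u"
    using nu nw by (simp add: abs_mult divide_inverse_commute)
  also have "\<dots> \<le> norm (w - u) / norm u + norm (w - u) / norm u"
    using norm_triangle_ineq3[of u w]
    by (intro add_left_mono divide_right_mono) (simp_all add: norm_minus_commute)
  finally show ?thesis by simp
qed

lemma rel_close_normalize_tendsto:
  fixes u w :: "nat \<Rightarrow> 'a::real_normed_vector"
  assumes "\<And>i. u i \<noteq> 0" and "rel_close u w"
    and "(\<lambda>i. u i /\<^sub>R norm (u i)) \<longlonglongrightarrow> a"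
  shows "(\<lambda>i. w i /\<^sub>R norm (w i)) \<longlonglongrightarrow> a"
proof -
  have "(\<lambda>i. w i /\<^sub>R norm (w i) - u i /\<^sub>R norm (u i)) \<longlonglongrightarrow> 0"
  proof (rule Lim_null_comparison)
    show "\<forall>\<^sub>F i in sequentially. norm (w i /\<^sub>R norm (w i) - u i /\<^sub>R norm (u i))
            \<le> 2 * norm (w i - u i) / norm (u i)"
      using norm_normalize_diff_le[OF assms(1)] by (intro always_eventually allI)
    show "(\<lambda>i. 2 * norm (w i - u i) / norm (u i)) \<longlonglongrightarrow> 0"
      using tendsto_mult_right_zero[OF assms(2)[unfolded rel_close_def], of 2]
      by (simp add: norm_minus_commute)
  qed
  from tendsto_add[OF this assms(3)] show ?thesis by simp
qed

lemma rel_close_eventually_nonzero: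
  assumes "\<And>i. x i \<noteq> 0" and "rel_close x y"
  shows "\<forall>\<^sub>F i in sequentially. y i \<noteq> 0"
proof -
  have "\<forall>\<^sub>F i in sequentially. norm (x i - y i) / norm (x i) < 1"
    using assms(2) by (auto simp: rel_close_def tendsto_iff)
  then show ?thesis
    by (rule eventually_mono) (use assms(1) in auto)
qed

lemma rel_close_scaled_direction:
  assumes "\<And>i. y i \<noteq> 0" and "(\<lambda>i. y i /\<^sub>R norm (y i)) \<longlonglongrightarrow> p"
  shows "rel_close y (\<lambda>i. norm (y i) *\<^sub>R p)"
proof -
  have "norm (y i - norm (y i) *\<^sub>R p) / norm (y i) = norm (y i /\<^sub>R norm (y i) - p)" for i
  proof -
    have "y i - norm (y i) *\<^sub>R p = norm (y i) *\<^sub>R (y i /\<^sub>R norm (y i) - p)"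
      using assms(1) by (simp add: scaleR_diff_right)
    then show ?thesis using assms(1) by simp
  qed
  moreover have "(\<lambda>i. norm (y i /\<^sub>R norm (y i) - p)) \<longlonglongrightarrow> 0"
    using tendsto_norm_zero[OF LIM_zero[OF assms(2)]] .
  ultimately show ?thesis unfolding rel_close_def by simp
qed

locale bilipschitz_at_0 =
  fixes h :: "'a::euclidean_space \<Rightarrow> 'a" and r K1 K2 :: real
  assumes r_pos: "r > 0" and h_0: "h 0 = 0"
    and K1_pos: "0 < K1" and K1_le_K2: "K1 \<le> K2"
    and bilipschitz: "\<And>x y. x \<in> ball 0 r \<Longrightarrow> y \<in> ball 0 r \<Longrightarrow>
          K1 * norm (x - y) \<le> norm (h x - h y) \<and> norm (h x - h y) \<le> K2 * norm (x - y)"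
begin

lemma norm_image_ge: "x \<in> ball 0 r \<Longrightarrow> K1 * norm x \<le> norm (h x)"
  using bilipschitz[of x 0] r_pos h_0 by simp

lemma norm_image_le: "x \<in> ball 0 r \<Longrightarrow> norm (h x) \<le> K2 * norm x"
  using bilipschitz[of x 0] r_pos h_0 by simp

lemma image_nonzero: "x \<in> ball 0 r \<Longrightarrow> x \<noteq> 0 \<Longrightarrow> h x \<noteq> 0"
  using norm_image_ge[of x] K1_pos by (auto simp: mult_le_0_iff)

lemma ball_subset_image: "\<exists>\<epsilon>>0. ball 0 \<epsilon> \<subseteq> h ` ball 0 r"
proof -
  have "lipschitz_on K2 (ball 0 r) h"
    unfolding lipschitz_on_def using K1_pos K1_le_K2 bilipschitz by (auto simp: dist_norm)
  then have "continuous_on (ball 0 r) h" by (rule lipschitz_on_continuous_on)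
  moreover have "inj_on h (ball 0 r)"
  proof (rule inj_onI)
    fix x y assume "x \<in> ball 0 r" "y \<in> ball 0 r" "h x = h y"
    then show "x = y" using bilipschitz[of x y] K1_pos by (simp add: mult_le_0_iff)
  qed
  ultimately have "open (h ` ball 0 r)" by (simp add: invariance_of_domain)
  moreover have "0 \<in> h ` ball 0 r" using r_pos h_0 by (metis centre_in_ball image_eqI)
  ultimately show ?thesis using open_contains_ball by blast
qed

lemma tendsto_zero_image:
  assumes "\<And>i. x i \<in> ball 0 r" and "x \<longlonglongrightarrow> 0"
  shows "(\<lambda>i. h (x i)) \<longlonglongrightarrow> 0"
proof (rule Lim_null_comparison)
  show "\<forall>\<^sub>F i in sequentially. norm (h (x i)) \<le> K2 * norm (x i)"
    using norm_image_le assms(1) by simp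
  show "(\<lambda>i. K2 * norm (x i)) \<longlonglongrightarrow> 0"
    using tendsto_mult_right_zero[OF tendsto_norm_zero[OF assms(2)]] .
qed

lemma tendsto_zero_reflect:
  assumes "\<forall>\<^sub>F i in sequentially. x i \<in> ball 0 r" and "(\<lambda>i. h (x i)) \<longlonglongrightarrow> 0"
  shows "x \<longlonglongrightarrow> 0"
proof (rule Lim_null_comparison)
  show "\<forall>\<^sub>F i in sequentially. norm (x i) \<le> norm (h (x i)) / K1"
    using assms(1) by (rule eventually_mono) (use norm_image_ge K1_pos in \<open>simp add: field_simps\<close>)
  show "(\<lambda>i. norm (h (x i)) / K1) \<longlonglongrightarrow> 0"
    using tendsto_divide_zero[OF tendsto_norm_zero[OF assms(2)]] .
qed

lemma rel_close_image:
  assumes "\<forall>\<^sub>F i in sequentially. x i \<in> ball 0 r \<and> x' i \<in> ball 0 r \<and> x i \<noteq> 0"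
    and "rel_close x x'"
  shows "rel_close (\<lambda>i. h (x i)) (\<lambda>i. h (x' i))"
  unfolding rel_close_def
proof (rule Lim_null_comparison)
  show "\<forall>\<^sub>F i in sequentially. norm (norm (h (x i) - h (x' i)) / norm (h (x i)))
          \<le> K2 / K1 * (norm (x i - x' i) / norm (x i))"
    using assms(1)
  proof (rule eventually_mono)
    fix i assume i: "x i \<in> ball 0 r \<and> x' i \<in> ball 0 r \<and> x i \<noteq> 0"
    then have "norm (h (x i) - h (x' i)) / norm (h (x i)) \<le> K2 * norm (x i - x' i) / (K1 * norm (x i))"
      using bilipschitz[of "x i" "x' i"] norm_image_ge[of "x i"] K1_pos K1_le_K2
      by (intro frac_le) auto
    then show "norm (norm (h (x i) - h (x' i)) / norm (h (x i)))
          \<le> K2 / K1 * (norm (x i - x' i) / norm (x i))" by simp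
  qed
  show "(\<lambda>i. K2 / K1 * (norm (x i - x' i) / norm (x i))) \<longlonglongrightarrow> 0"
    using tendsto_mult_right_zero assms(2) unfolding rel_close_def by blast
qed

lemma rel_close_reflect:
  assumes "\<forall>\<^sub>F i in sequentially. x i \<in> ball 0 r \<and> x' i \<in> ball 0 r \<and> x i \<noteq> 0"
    and "rel_close (\<lambda>i. h (x i)) (\<lambda>i. h (x' i))"
  shows "rel_close x x'"
  unfolding rel_close_def
proof (rule Lim_null_comparison)
  show "\<forall>\<^sub>F i in sequentially. norm (norm (x i - x' i) / norm (x i))
          \<le> K2 / K1 * (norm (h (x i) - h (x' i)) / norm (h (x i)))"
    using assms(1)
  proof (rule eventually_mono)
    fix i assume i: "x i \<in> ball 0 r \<and> x' i \<in> ball 0 r \<and> x i \<noteq> 0"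
    then have "norm (h (x i)) > 0" using image_nonzero by simp
    with i have "norm (x i - x' i) / norm (x i)
        \<le> (norm (h (x i) - h (x' i)) / K1) / (norm (h (x i)) / K2)"
      using bilipschitz[of "x i" "x' i"] norm_image_le[of "x i"] K1_pos K1_le_K2
      by (intro frac_le) (auto simp: field_simps)
    then show "norm (norm (x i - x' i) / norm (x i))
          \<le> K2 / K1 * (norm (h (x i) - h (x' i)) / norm (h (x i)))"
      by (simp add: mult.commute)
  qed
  show "(\<lambda>i. K2 / K1 * (norm (h (x i) - h (x' i)) / norm (h (x i)))) \<longlonglongrightarrow> 0"
    using tendsto_mult_right_zero assms(2) unfolding rel_close_def by blast
qed

lemma direction_in_preimage_of_ray:
  assumes u: "\<And>i. u i \<in> ball 0 r" "\<And>i. u i \<noteq> 0" "u \<longlonglongrightarrow> 0"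
    and u_dir: "(\<lambda>i. u i /\<^sub>R norm (u i)) \<longlonglongrightarrow> a" and "norm a = 1"
    and hu_dir: "(\<lambda>i. h (u i) /\<^sub>R norm (h (u i))) \<longlonglongrightarrow> p" and "norm p = 1"
  shows "a \<in> dirs {x \<in> ball 0 r. h x \<in> ray p}"
proof -
  define y where "y i = h (u i)" for i
  have y_nz: "y i \<noteq> 0" for i using image_nonzero u by (simp add: y_def)
  have "y \<longlonglongrightarrow> 0" unfolding y_def by (rule tendsto_zero_image[OF u(1,3)])
  obtain \<epsilon> where "\<epsilon> > 0" and \<epsilon>: "ball 0 \<epsilon> \<subseteq> h ` ball 0 r"
    using ball_subset_image by blast
  define w where "w i = inv_into (ball 0 r) h (norm (y i) *\<^sub>R p)" for i
  have "\<forall>\<^sub>F i in sequentially. norm (y i) < \<epsilon>"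
    using \<open>y \<longlonglongrightarrow> 0\<close> \<open>\<epsilon> > 0\<close> by (auto simp: tendsto_iff)
  then have w: "\<forall>\<^sub>F i in sequentially. w i \<in> ball 0 r \<and> h (w i) = norm (y i) *\<^sub>R p"
  proof (rule eventually_mono)
    fix i assume "norm (y i) < \<epsilon>"
    then have "norm (y i) *\<^sub>R p \<in> h ` ball 0 r" using \<epsilon> \<open>norm p = 1\<close> by auto
    then show "w i \<in> ball 0 r \<and> h (w i) = norm (y i) *\<^sub>R p"
      unfolding w_def by (metis inv_into_into f_inv_into_f)
  qed
  have w_image: "\<forall>\<^sub>F i in sequentially. norm (y i) *\<^sub>R p = h (w i)"
    using w by (rule eventually_mono) simp
  have "rel_close y (\<lambda>i. h (w i))"
    using rel_close_scaled_direction[OF y_nz hu_dir[folded y_def]]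
    unfolding rel_close_def by (rule Lim_transform_eventually) (rule eventually_mono[OF w_image], simp)
  moreover have "\<forall>\<^sub>F i in sequentially. u i \<in> ball 0 r \<and> w i \<in> ball 0 r \<and> u i \<noteq> 0"
    using w by (rule eventually_mono) (use u(1,2) in blast)
  ultimately have "rel_close u w"
    using rel_close_reflect unfolding y_def by blast
  show ?thesis
  proof (rule dirsI_eventually)
    show "\<forall>\<^sub>F i in sequentially. w i \<in> {x \<in> ball 0 r. h x \<in> ray p} - {0}"
      using w
    proof (rule eventually_mono)
      fix i assume wi: "w i \<in> ball 0 r \<and> h (w i) = norm (y i) *\<^sub>R p"
      then have "h (w i) \<in> ray p" unfolding ray_def by auto
      moreover have "h (w i) \<noteq> 0" using wi y_nz[of i] \<open>norm p = 1\<close> by auto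
      ultimately show "w i \<in> {x \<in> ball 0 r. h x \<in> ray p} - {0}"
        using wi h_0 by auto
    qed
    have "(\<lambda>i. norm (y i) *\<^sub>R p) \<longlonglongrightarrow> 0"
      using tendsto_scaleR[OF tendsto_norm_zero[OF \<open>y \<longlonglongrightarrow> 0\<close>] tendsto_const] by simp
    then have "(\<lambda>i. h (w i)) \<longlonglongrightarrow> 0" using w_image by (rule Lim_transform_eventually)
    then show "w \<longlonglongrightarrow> 0"
      by (rule tendsto_zero_reflect[rotated]) (rule eventually_mono[OF w], simp)
    show "(\<lambda>i. w i /\<^sub>R norm (w i)) \<longlonglongrightarrow> a"
      by (rule rel_close_normalize_tendsto[OF u(2) \<open>rel_close u w\<close> u_dir])
  qed fact
qed

lemma direction_of_image_unique:
  assumes ssp: "SSP {x \<in> ball 0 r. h x \<in> ray p}" and "norm p = 1"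
    and a: "a \<in> dirs {x \<in> ball 0 r. h x \<in> ray p}"
    and u: "\<And>i. u i \<in> ball 0 r" "\<And>i. u i \<noteq> 0" "u \<longlonglongrightarrow> 0"
    and u_dir: "(\<lambda>i. u i /\<^sub>R norm (u i)) \<longlonglongrightarrow> a"
    and hu_dir: "(\<lambda>i. h (u i) /\<^sub>R norm (h (u i))) \<longlonglongrightarrow> q"
  shows "q = p"
proof -
  obtain b where b: "\<And>i. b i \<in> ball 0 r" "\<And>i. h (b i) \<in> ray p" and "rel_close u b"
    using ssp u(3) u_dir a unfolding SSP_def rel_close_def by blast
  have hu_nz: "h (u i) \<noteq> 0" for i using image_nonzero u by simp
  have hb: "rel_close (\<lambda>i. h (u i)) (\<lambda>i. h (b i))"
    using u b \<open>rel_close u b\<close> by (intro rel_close_image) auto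
  have "(\<lambda>i. h (b i) /\<^sub>R norm (h (b i))) \<longlonglongrightarrow> q"
    and "\<forall>\<^sub>F i in sequentially. h (b i) \<noteq> 0"
    using rel_close_normalize_tendsto[OF hu_nz hb hu_dir] rel_close_eventually_nonzero[OF hu_nz hb]
    by simp_all
  moreover from this(2) have "(\<lambda>i. h (b i) /\<^sub>R norm (h (b i))) \<longlonglongrightarrow> p"
    by (rule tendsto_eventually[OF eventually_mono])
      (use ray_normalize[OF b(2) _ \<open>norm p = 1\<close>] in simp)
  ultimately show "q = p" using LIMSEQ_unique by blast
qed

lemma lift_direction_of_image_ray:
  assumes "p \<in> dirs (h ` (ray a \<inter> ball 0 r))" and "norm a = 1"
  obtains u where "\<And>i. u i \<in> ball 0 r" "\<And>i. u i \<noteq> 0" "\<And>i. u i /\<^sub>R norm (u i) = a"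
    "u \<longlonglongrightarrow> 0" "(\<lambda>i. h (u i) /\<^sub>R norm (h (u i))) \<longlonglongrightarrow> p"
proof -
  obtain y where y: "\<And>i. y i \<in> h ` (ray a \<inter> ball 0 r) - {0}" "y \<longlonglongrightarrow> 0"
      "(\<lambda>i. y i /\<^sub>R norm (y i)) \<longlonglongrightarrow> p"
    using assms(1) unfolding dirs_def by blast
  have "\<exists>v. v \<in> ray a \<inter> ball 0 r \<and> h v = y i" for i
    using y(1)[of i] by (metis DiffD1 imageE)
  then obtain u where u: "\<And>i. u i \<in> ray a \<inter> ball 0 r" "\<And>i. h (u i) = y i"
    by (metis choice)
  have u_nz: "u i \<noteq> 0" for i using y(1)[of i] u[of i] h_0 by auto
  show ?thesis
  proof
    show "u i \<in> ball 0 r" for i using u(1) by blast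
    show "u i /\<^sub>R norm (u i) = a" for i using ray_normalize[OF _ u_nz assms(2)] u(1) by blast
    show "u \<longlonglongrightarrow> 0"
    proof (rule tendsto_zero_reflect)
      show "\<forall>\<^sub>F i in sequentially. u i \<in> ball 0 r" using u(1) by (intro always_eventually) blast
      show "(\<lambda>i. h (u i)) \<longlonglongrightarrow> 0" using y(2) by (simp add: u(2))
    qed
    show "(\<lambda>i. h (u i) /\<^sub>R norm (h (u i))) \<longlonglongrightarrow> p" using y(3) by (simp add: u(2))
  qed (rule u_nz)
qed

lemma dirs_image_ray:
  assumes ssp: "\<And>\<tau>. is_semiline \<tau> \<Longrightarrow> SSP {x \<in> ball 0 r. h x \<in> \<tau>}" and "norm a = 1"
  shows "\<exists>p. dirs (h ` (ray a \<inter> ball 0 r)) = {p}"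
proof -
  let ?A = "h ` (ray a \<inter> ball 0 r)"
  define x where "x k = (r / real (k + 2)) *\<^sub>R a" for k
  have x: "x k \<in> ray a \<inter> ball 0 r" "x k \<noteq> 0" for k
  proof -
    have "0 < r / real (k + 2)" "r / real (k + 2) < r"
      using r_pos by (simp_all add: divide_less_eq)
    then show "x k \<in> ray a \<inter> ball 0 r" "x k \<noteq> 0"
      using \<open>norm a = 1\<close> unfolding x_def ray_def by auto
  qed
  have "x \<longlonglongrightarrow> 0"
    unfolding x_def using tendsto_scaleR[OF LIMSEQ_ignore_initial_segment[OF lim_const_over_n[of r], of 2]
        tendsto_const, of a]
    by simp
  then have "(\<lambda>k. h (x k)) \<longlonglongrightarrow> 0"
    using x(1) by (intro tendsto_zero_image) auto
  then have "dirs ?A \<noteq> {}"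
    using x image_nonzero by (intro dirs_nonempty[of "\<lambda>k. h (x k)"]) auto
  moreover have "q = p" if p: "p \<in> dirs ?A" and q: "q \<in> dirs ?A" for p q
  proof -
    have "norm p = 1" using p by (simp add: dirs_def)
    obtain u where u: "\<And>i. u i \<in> ball 0 r" "\<And>i. u i \<noteq> 0" "\<And>i. u i /\<^sub>R norm (u i) = a"
        "u \<longlonglongrightarrow> 0" "(\<lambda>i. h (u i) /\<^sub>R norm (h (u i))) \<longlonglongrightarrow> p"
      using lift_direction_of_image_ray[OF p \<open>norm a = 1\<close>] by blast
    have a_dir: "a \<in> dirs {x \<in> ball 0 r. h x \<in> ray p}"
      using u(3) by (intro direction_in_preimage_of_ray[OF u(1,2,4) _ \<open>norm a = 1\<close> u(5) \<open>norm p = 1\<close>]) simp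
    obtain u' where u': "\<And>i. u' i \<in> ball 0 r" "\<And>i. u' i \<noteq> 0" "\<And>i. u' i /\<^sub>R norm (u' i) = a"
        "u' \<longlonglongrightarrow> 0" "(\<lambda>i. h (u' i) /\<^sub>R norm (h (u' i))) \<longlonglongrightarrow> q"
      using lift_direction_of_image_ray[OF q \<open>norm a = 1\<close>] by blast
    show "q = p"
      using u'(3) by (intro direction_of_image_unique[OF ssp[OF is_semiline_ray[OF \<open>norm p = 1\<close>]]
            \<open>norm p = 1\<close> a_dir u'(1,2,4) _ u'(5)]) simp
  qed
  ultimately show ?thesis by blast
qed

end

theorem proposition2p20:
  fixes h :: "'a::euclidean_space \<Rightarrow> 'a" and r K1 K2 :: real
  assumes "r > 0" and "h 0 = 0"
    and "0 < K1" and "K1 \<le> K2"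
    and "\<And>x y. x \<in> ball 0 r \<Longrightarrow> y \<in> ball 0 r \<Longrightarrow>
            K1 * norm (x - y) \<le> norm (h x - h y) \<and> norm (h x - h y) \<le> K2 * norm (x - y)"
    and "\<And>\<tau>. is_semiline \<tau> \<Longrightarrow> SSP {x \<in> ball 0 r. h x \<in> \<tau>}"
  shows "\<forall>l. is_semiline l \<longrightarrow>
           is_semiline (LD (h ` (l \<inter> ball 0 r))) \<and> (\<exists>p. dirs (h ` (l \<inter> ball 0 r)) = {p})"
proof (intro allI impI)
  interpret bilipschitz_at_0 h r K1 K2
    using assms(1-5) by unfold_locales
  fix l :: "'a set"
  assume "is_semiline l"
  then obtain a where "norm a = 1" and l: "l = ray a"
    unfolding is_semiline_def ray_def by blast
  then obtain p where p: "dirs (h ` (l \<inter> ball 0 r)) = {p}"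
    using dirs_image_ray[OF assms(6)] by blast
  then have "norm p = 1" unfolding dirs_def by blast
  then show "is_semiline (LD (h ` (l \<inter> ball 0 r))) \<and> (\<exists>p. dirs (h ` (l \<inter> ball 0 r)) = {p})"
    using p LD_eq_ray[OF p] is_semiline_ray by simp
qed

end
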